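(* Let $G=(V,E)$ be a directed graph with $m=|E|$ edges and let $\mathcal{S}_0$ be any initial state. For every $0<\beta<1$, the convergence time $T$ of the \textsc{Random Pick} process on $G$ from $\mathcal{S}_0$ satisfies $\Pr[T\ge m/\beta]\le\beta$.
   Context: A state is a map $V\to\{b,r,u\}$ (blue, red, uncolored); colored means blue or red. \textsc{Random Pick} process: in each round $t=1,2,\dots$, every node $v$ with at least one out-neighbor picks an out-neighbor $ps_t(v)$ uniformly at random, independently; $\mathcal{S}_t(v)=\mathcal{S}_{t-1}(ps_t(v))$ if $\mathcal{S}_{t-1}(v)=u$ and $\mathcal{S}_{t-1}(ps_t(v))\ne u$, else $\mathcal{S}_t(v)=\mathcal{S}_{t-1}(v)$. A state is stable if no uncolored node has a colored out-neighbor; the convergence time is the smallest $t\ge0$ with $\mathcal{S}_t$ stable. *)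

theory Defs
  imports "HOL-Probability.Probability"
begin

datatype color = Blue | Red | Uncolored

type_synonym 'v state = "'v \<Rightarrow> color"

definition colored :: "color \<Rightarrow> bool" where
  "colored c \<longleftrightarrow> c \<noteq> Uncolored"

definition out_nbrs :: "('v \<times> 'v) set \<Rightarrow> 'v \<Rightarrow> 'v set" where
  "out_nbrs E v = {w. (v, w) \<in> E}"

definition stable :: "'v set \<Rightarrow> ('v \<times> 'v) set \<Rightarrow> 'v state \<Rightarrow> bool" where
  "stable V E S \<longleftrightarrow>
     (\<forall>v\<in>V. S v = Uncolored \<longrightarrow> (\<forall>w \<in> out_nbrs E v. \<not> colored (S w)))"

definition picks :: "'v set \<Rightarrow> ('v \<times> 'v) set \<Rightarrow> ('v \<Rightarrow> 'v option) pmf" where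
  "picks V E = Pi_pmf {v \<in> V. out_nbrs E v \<noteq> {}} None
                  (\<lambda>v. map_pmf Some (pmf_of_set (out_nbrs E v)))"

definition update :: "'v state \<Rightarrow> ('v \<Rightarrow> 'v option) \<Rightarrow> 'v state" where
  "update S p = (\<lambda>v. case p v of
       None \<Rightarrow> S v
     | Some w \<Rightarrow> (if S v = Uncolored \<and> colored (S w) then S w else S v))"

definition rp_step :: "'v set \<Rightarrow> ('v \<times> 'v) set \<Rightarrow> 'v state \<Rightarrow> 'v state pmf" where
  "rp_step V E S = map_pmf (update S) (picks V E)"

fun rp_traj :: "'v set \<Rightarrow> ('v \<times> 'v) set \<Rightarrow> 'v state \<Rightarrow> nat \<Rightarrow> 'v state list pmf" where
  "rp_traj V E S0 0 = return_pmf [S0]"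
| "rp_traj V E S0 (Suc n) =
     bind_pmf (rp_traj V E S0 n) (\<lambda>xs. map_pmf (\<lambda>s. xs @ [s]) (rp_step V E (last xs)))"

text \<open>Probability that the convergence time T (least t with S_t stable) is at
  least x. The event T \<ge> x means: S_t is not stable for every t < x; it only
  depends on the states S_0, ..., S_N with N = nat \<lceil>x\<rceil>.\<close>
definition prob_conv_time_ge ::
  "'v set \<Rightarrow> ('v \<times> 'v) set \<Rightarrow> 'v state \<Rightarrow> real \<Rightarrow> real" where
  "prob_conv_time_ge V E S0 x =
     measure_pmf.prob (rp_traj V E S0 (nat \<lceil>x\<rceil>))
       {xs. \<forall>t < length xs. real t < x \<longrightarrow> \<not> stable V E (xs ! t)}"

end

theory Submission
  imports Defs
begin

text \<open>Count the edges whose tail is uncolored. This potential is at most \<open>m\<close>, never increases,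
  and while the state is unstable it drops by at least 1 in expectation per round: some
  uncolored \<open>v\<close> has a colored out-neighbor \<open>w\<close>, picks it with probability \<open>1/deg v\<close>, and
  then all \<open>deg v\<close> edges leaving \<open>v\<close> stop counting. Hence the potential plus the number of
  unstable rounds so far is a supermartingale, which gives
  \<open>N \<cdot> Pr[S_0, \<dots>, S_(N-1) all unstable] \<le> m\<close>; take \<open>N = \<lceil>m/\<beta>\<rceil>\<close>.\<close>

definition uncolored_tail_edges :: "('v \<times> 'v) set \<Rightarrow> 'v state \<Rightarrow> ('v \<times> 'v) set" where
  "uncolored_tail_edges E S = {e \<in> E. S (fst e) = Uncolored}"

lemma card_uncolored_tail_edges_le:
  "finite E \<Longrightarrow> card (uncolored_tail_edges E S) \<le> card E"
  unfolding uncolored_tail_edges_def by (rule card_mono) auto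

lemma update_colored: "colored (S v) \<Longrightarrow> update S p v = S v"
  by (auto simp: update_def colored_def split: option.splits)

lemma uncolored_tail_edges_update_subset:
  "uncolored_tail_edges E (update S p) \<subseteq> uncolored_tail_edges E S"
  unfolding uncolored_tail_edges_def using update_colored[of S] by (fastforce simp: colored_def)

lemma uncolored_tail_edges_update_pick:
  assumes "S v = Uncolored" "colored (S w)" "p v = Some w"
  shows "uncolored_tail_edges E (update S p) \<subseteq> uncolored_tail_edges E S - {v} \<times> out_nbrs E v"
proof -
  have "update S p v = S w" using assms by (simp add: update_def)
  with assms(2) uncolored_tail_edges_update_subset[of E S p] show ?thesis
    by (auto simp: uncolored_tail_edges_def colored_def)
qed

lemma card_uncolored_tail_edges_update:
  assumes "finite E" "S v = Uncolored" "colored (S w)"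
  shows "card (uncolored_tail_edges E (update S p)) + (if p v = Some w then card (out_nbrs E v) else 0)
           \<le> card (uncolored_tail_edges E S)"
proof (cases "p v = Some w")
  case True
  let ?A = "uncolored_tail_edges E S" and ?B = "{v} \<times> out_nbrs E v"
  have fin: "finite ?A" using assms(1) by (simp add: uncolored_tail_edges_def)
  have "?B \<subseteq> ?A" using assms(2) by (auto simp: uncolored_tail_edges_def out_nbrs_def)
  hence "card (?A - ?B) + card ?B = card ?A"
    using fin by (metis card_Diff_subset finite_subset card_mono le_add_diff_inverse2)
  moreover have "card (uncolored_tail_edges E (update S p)) \<le> card (?A - ?B)"
    using fin uncolored_tail_edges_update_pick[of S v w p E] assms(2,3) True by (intro card_mono) auto
  moreover have "card ?B = card (out_nbrs E v)" by (simp add: card_cartesian_product_singleton)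
  ultimately show ?thesis using True by simp
next
  case False
  have "finite (uncolored_tail_edges E S)" using assms(1) by (simp add: uncolored_tail_edges_def)
  with False show ?thesis by (simp add: card_mono uncolored_tail_edges_update_subset)
qed

lemma finite_out_nbrs: "finite E \<Longrightarrow> finite (out_nbrs E v)"
  unfolding out_nbrs_def by (rule finite_subset[of _ "snd ` E"]) force+

lemma prob_picks_eq:
  assumes "finite E" "v \<in> V" "w \<in> out_nbrs E v"
  shows "measure_pmf.prob (picks V E) {p. p v = Some w} = 1 / card (out_nbrs E v)"
proof -
  have dom: "finite {v \<in> V. out_nbrs E v \<noteq> {}}"
    by (rule finite_subset[of _ "fst ` E"]) (use assms(1) in \<open>force simp: out_nbrs_def\<close>)+
  have "measure_pmf.prob (picks V E) {p. p v = Some w}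
          = measure_pmf.prob (map_pmf (\<lambda>p. p v) (picks V E)) {Some w}"
    by (simp add: vimage_def)
  also have "map_pmf (\<lambda>p. p v) (picks V E) = map_pmf Some (pmf_of_set (out_nbrs E v))"
    unfolding picks_def using assms(2,3) by (subst Pi_pmf_component[OF dom]) auto
  also have "measure_pmf.prob \<dots> {Some w} = pmf (pmf_of_set (out_nbrs E v)) w"
    by (simp add: vimage_def measure_pmf_single)
  also have "\<dots> = 1 / card (out_nbrs E v)"
    using assms finite_out_nbrs by (subst pmf_of_set) auto
  finally show ?thesis .
qed

lemma rp_step_drift:
  assumes "finite E" "\<not> stable V E S"
  shows "(\<integral>\<^sup>+ S'. of_nat (card (uncolored_tail_edges E S')) \<partial>rp_step V E S) + 1
           \<le> of_nat (card (uncolored_tail_edges E S))"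
proof -
  obtain v w where vw: "v \<in> V" "S v = Uncolored" "w \<in> out_nbrs E v" "colored (S w)"
    using assms(2) unfolding stable_def by blast
  let ?\<Phi> = "\<lambda>S. of_nat (card (uncolored_tail_edges E S)) :: ennreal"
  let ?d = "card (out_nbrs E v)" and ?hit = "{p. p v = Some w}"
  have "?d > 0" using vw(3) finite_out_nbrs[OF assms(1)] card_gt_0_iff by blast
  hence hit: "of_nat ?d * emeasure (picks V E) ?hit = 1"
    using prob_picks_eq[OF assms(1) vw(1,3)]
    by (simp add: measure_pmf.emeasure_eq_measure ennreal_of_nat_eq_real_of_nat flip: ennreal_mult)
  have "(\<integral>\<^sup>+ S'. ?\<Phi> S' \<partial>rp_step V E S) + 1
          = (\<integral>\<^sup>+ p. ?\<Phi> (update S p) + of_nat ?d * indicator ?hit p \<partial>picks V E)"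
    by (simp add: rp_step_def nn_integral_map_pmf nn_integral_add nn_integral_cmult hit)
  also have "\<dots> \<le> (\<integral>\<^sup>+ p. ?\<Phi> S \<partial>picks V E)"
  proof (rule nn_integral_mono)
    fix p
    have "of_nat (card (uncolored_tail_edges E (update S p)) + (if p v = Some w then ?d else 0))
            \<le> ?\<Phi> S"
      using card_uncolored_tail_edges_update[OF assms(1) vw(2,4)] by (simp only: of_nat_le_iff)
    then show "?\<Phi> (update S p) + of_nat ?d * indicator ?hit p \<le> ?\<Phi> S"
      by (auto split: if_splits)
  qed
  finally show ?thesis by simp
qed

definition unstable_prefix :: "'v set \<Rightarrow> ('v \<times> 'v) set \<Rightarrow> 'v state list \<Rightarrow> bool" where
  "unstable_prefix V E xs \<longleftrightarrow> (\<forall>t < length xs - 1. \<not> stable V E (xs ! t))"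

lemma unstable_prefix_snoc:
  "xs \<noteq> [] \<Longrightarrow> unstable_prefix V E (xs @ [s]) \<longleftrightarrow> unstable_prefix V E xs \<and> \<not> stable V E (last xs)"
  unfolding unstable_prefix_def
  by (cases xs rule: rev_cases) (auto simp: nth_append less_Suc_eq)

lemma length_rp_traj: "xs \<in> set_pmf (rp_traj V E S0 n) \<Longrightarrow> length xs = Suc n"
  by (induction n arbitrary: xs) (auto simp: rp_step_def)

lemma nn_integral_rp_traj_supermartingale:
  assumes "finite E"
  shows "(\<integral>\<^sup>+ xs. (if unstable_prefix V E xs then of_nat (card (uncolored_tail_edges E (last xs)) + n)
                   else 0) \<partial>rp_traj V E S0 n)
         \<le> of_nat (card (uncolored_tail_edges E S0))"
proof (induction n)
  case 0
  show ?case by (simp add: unstable_prefix_def)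
next
  case (Suc n)
  let ?\<Phi> = "\<lambda>S. card (uncolored_tail_edges E S)"
  let ?g = "\<lambda>n xs. if unstable_prefix V E xs then of_nat (?\<Phi> (last xs) + n) else 0 :: ennreal"
  have "(\<integral>\<^sup>+ xs. ?g (Suc n) xs \<partial>rp_traj V E S0 (Suc n))
          = (\<integral>\<^sup>+ xs. (\<integral>\<^sup>+ S. ?g (Suc n) (xs @ [S]) \<partial>rp_step V E (last xs)) \<partial>rp_traj V E S0 n)"
    by (simp add: nn_integral_map_pmf)
  also have "\<dots> \<le> (\<integral>\<^sup>+ xs. ?g n xs \<partial>rp_traj V E S0 n)"
  proof (intro nn_integral_mono_AE AE_pmfI)
    fix xs assume "xs \<in> set_pmf (rp_traj V E S0 n)"
    hence ne: "xs \<noteq> []" using length_rp_traj by fastforce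
    show "(\<integral>\<^sup>+ S. ?g (Suc n) (xs @ [S]) \<partial>rp_step V E (last xs)) \<le> ?g n xs"
    proof (cases "unstable_prefix V E xs \<and> \<not> stable V E (last xs)")
      case True
      have "(\<integral>\<^sup>+ S. ?g (Suc n) (xs @ [S]) \<partial>rp_step V E (last xs))
              = (\<integral>\<^sup>+ S. of_nat (?\<Phi> S) \<partial>rp_step V E (last xs)) + 1 + of_nat n"
        using True ne by (simp add: unstable_prefix_snoc nn_integral_add add.assoc)
      also have "\<dots> \<le> of_nat (?\<Phi> (last xs)) + of_nat n"
        using rp_step_drift[OF assms] True by (intro add_right_mono) auto
      finally show ?thesis using True by simp
    next
      case False
      then show ?thesis using ne by (simp add: unstable_prefix_snoc)
    qed
  qed
  also have "\<dots> \<le> of_nat (?\<Phi> S0)" by (rule Suc.IH)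
  finally show ?case .
qed

lemma prob_unstable_prefix_le:
  assumes "finite E"
  shows "real n * measure_pmf.prob (rp_traj V E S0 n) {xs. unstable_prefix V E xs} \<le> card E"
proof -
  let ?U = "{xs. unstable_prefix V E xs}"
  have "ennreal (real n * measure_pmf.prob (rp_traj V E S0 n) ?U)
          = (\<integral>\<^sup>+ xs. of_nat n * indicator ?U xs \<partial>rp_traj V E S0 n)"
    by (simp add: nn_integral_cmult_indicator measure_pmf.emeasure_eq_measure ennreal_mult
                  ennreal_of_nat_eq_real_of_nat)
  also have "\<dots> \<le> (\<integral>\<^sup>+ xs. (if unstable_prefix V E xs
                      then of_nat (card (uncolored_tail_edges E (last xs)) + n) else 0) \<partial>rp_traj V E S0 n)"
    by (intro nn_integral_mono) (simp add: indicator_def)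
  also have "\<dots> \<le> of_nat (card (uncolored_tail_edges E S0))"
    by (rule nn_integral_rp_traj_supermartingale[OF assms])
  also have "\<dots> \<le> of_nat (card E)"
    using card_uncolored_tail_edges_le[OF assms] by simp
  finally show ?thesis by (simp add: ennreal_of_nat_eq_real_of_nat ennreal_le_iff)
qed

theorem theorem3p3:
  fixes V :: "'v set" and E :: "('v \<times> 'v) set" and S0 :: "'v state" and \<beta> :: real
  assumes "finite V" and "E \<subseteq> V \<times> V" and "E \<noteq> {}"
    and "0 < \<beta>" and "\<beta> < 1"
  shows "prob_conv_time_ge V E S0 (real (card E) / \<beta>) \<le> \<beta>"
proof -
  define x where "x = real (card E) / \<beta>"
  define N where "N = nat \<lceil>x\<rceil>"
  let ?M = "rp_traj V E S0 N"
  let ?Ev = "{xs. \<forall>t < length xs. real t < x \<longrightarrow> \<not> stable V E (xs ! t)}"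
  have finE: "finite E" using assms(1,2) finite_subset by blast
  have "x > 0" using assms(3,4) finE by (simp add: x_def card_gt_0_iff)
  have "real t < x" if "t < N" for t
    using that by (simp add: N_def flip: not_le)
  hence "?Ev \<inter> set_pmf ?M \<subseteq> {xs. unstable_prefix V E xs}"
    unfolding unstable_prefix_def by (fastforce dest: length_rp_traj)
  hence "measure_pmf.prob ?M ?Ev \<le> measure_pmf.prob ?M {xs. unstable_prefix V E xs}"
    unfolding measure_Int_set_pmf[of ?M ?Ev, symmetric] by (rule measure_pmf.finite_measure_mono) simp
  hence "x * measure_pmf.prob ?M ?Ev \<le> real N * measure_pmf.prob ?M {xs. unstable_prefix V E xs}"
    using \<open>x > 0\<close> real_nat_ceiling_ge[of x] by (intro mult_mono) (auto simp: N_def)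
  also have "\<dots> \<le> \<beta> * x"
    using prob_unstable_prefix_le[OF finE] assms(4) by (simp add: x_def)
  finally show ?thesis
    using \<open>x > 0\<close> by (simp add: prob_conv_time_ge_def N_def x_def[symmetric] mult.commute)
qed

end
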